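(* Let $A\in\mathbb{R}^{l\times m}$ and $B\in\mathbb{R}^{n\times m}$, and consider the parametrized system $A\,(c\circ x^B)=0$ with parameters $c\in\mathbb{R}^m_{>0}$. Assume $\ker A\cap\mathbb{R}^m_{>0}\neq\emptyset$, $\dim P=1$ and $d=1$. Then the following are equivalent: (1) $|Y_c|\ge1$ for all $c\in\mathbb{R}^m_{>0}$; (2) $\tilde b_1\cdot\tilde b_\omega<0$.
   Context: Notation: for $x\in\mathbb{R}^n_{>0}$ and $y\in\mathbb{R}^n$, $x^y=\prod_{i=1}^n x_i^{y_i}$; for a matrix $B=(b^1,\dots,b^m)\in\mathbb{R}^{n\times m}$, $x^B\in\mathbb{R}^m_{>0}$ is the vector with entries $x^{b^j}$; $\circ$ denotes the componentwise product, and $(\cdot)^{-1}$ applied to a positive vector is componentwise. $1_m\in\mathbb{R}^m$ is the all-ones vector. (One class setting.) The coefficient polytope is $P=\{y\in\ker A\cap\mathbb{R}^m_{>0} : 1_m\cdot y=1\}$. The monomial dependency subspace is $D=\ker\begin{pmatrix}B\\ 1_m^{\mathsf T}\end{pmatrix}\subseteq\mathbb{R}^m$ and the monomial dependency is $d=\dim D$. The solution set on the coefficient polytope is $Y_c=\{y\in P : y^z=c^z \text{ for all } z\in D\}$. When $\dim P=1$, the closure $\overline P=\{y\in\ker A\cap\mathbb{R}^m_{\ge0}: 1_m\cdot y=1\}$ is a line segment with two endpoints $y^1,y^2$; set $q=(y^1-y^2)\circ(y^1+y^2)^{-1}\in\mathbb{R}^m$, and assume (after reordering the indices $\{1,\dots,m\}$)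 that $1=q_1\ge q_2\ge\cdots\ge q_m=-1$. Let $I_1,\dots,I_\omega\subseteq\{1,\dots,m\}$ be the $\omega$ equivalence classes of indices with equal (consecutive) components of $q$, ordered so that the common value $\tilde q_i$ of $q$ on $I_i$ is strictly decreasing in $i$. When $d=1$, let $b\in\mathbb{R}^m$ span $D$, and define the lumped vector $\tilde b\in\mathbb{R}^\omega$ by $\tilde b_i=\sum_{i'\in I_i}b_{i'}$. *)

theory Defs
  imports "HOL-Analysis.Analysis"
begin

definition pos_vec :: "real^'m \<Rightarrow> bool" where
  "pos_vec y \<longleftrightarrow> (\<forall>i. 0 < y $ i)"

definition coeff_polytope :: "real^'m^'l \<Rightarrow> (real^'m) set" where
  "coeff_polytope A = {y. A *v y = 0 \<and> (\<forall>i. 0 < y $ i) \<and> (\<Sum>i\<in>UNIV. y $ i) = 1}"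

definition coeff_polytope_closure :: "real^'m^'l \<Rightarrow> (real^'m) set" where
  "coeff_polytope_closure A = {y. A *v y = 0 \<and> (\<forall>i. 0 \<le> y $ i) \<and> (\<Sum>i\<in>UNIV. y $ i) = 1}"

definition mon_dep_space :: "real^'m^'n \<Rightarrow> (real^'m) set" where
  "mon_dep_space B = {z. B *v z = 0 \<and> (\<Sum>i\<in>UNIV. z $ i) = 0}"

definition vpow :: "real^'m \<Rightarrow> real^'m \<Rightarrow> real" where
  "vpow y z = (\<Prod>i\<in>UNIV. (y $ i) powr (z $ i))"

definition sol_set :: "real^'m^'l \<Rightarrow> real^'m^'n \<Rightarrow> real^'m \<Rightarrow> (real^'m) set" where
  "sol_set A B c = {y \<in> coeff_polytope A. \<forall>z \<in> mon_dep_space B. vpow y z = vpow c z}"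

definition qvec :: "real^'m \<Rightarrow> real^'m \<Rightarrow> real^'m" where
  "qvec y1 y2 = (\<chi> i. (y1 $ i - y2 $ i) / (y1 $ i + y2 $ i))"

definition lumped_first :: "real^'m \<Rightarrow> real^'m \<Rightarrow> real" where
  "lumped_first b q = (\<Sum>i\<in>{i. q $ i = Max (range (\<lambda>j. q $ j))}. b $ i)"

definition lumped_last :: "real^'m \<Rightarrow> real^'m \<Rightarrow> real" where
  "lumped_last b q = (\<Sum>i\<in>{i. q $ i = Min (range (\<lambda>j. q $ j))}. b $ i)"

end

theory Submission
  imports Defs
begin

(* Parametrise P by y(t) = (1 - t) y1 + t y2, 0 < t < 1. Each endpoint of the closed segment has
   a zero coordinate (otherwise the segment could be prolonged inside the closure of P), and the
   coordinates vanishing at y1 (q = -1) carry a factor t, those vanishing at y2 (q = 1) a factor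
   1 - t. Since D is spanned by b, the system reduces to the single equation
   sum_i b_i ln y_i = sum_i b_i ln c_i, whose right-hand side takes every real value, and along
   P its left-hand side is L ln t + F ln (1 - t) + K t with K continuous on [0, 1] and L, F the
   lumped entries of b at the two ends. Such a function maps ]0, 1[ onto R iff L F < 0. *)

lemma log_barrier_below:
  fixes L F r :: real and K :: "real \<Rightarrow> real"
  assumes K: "continuous_on {0..1} K" and L: "0 < L"
  shows "\<exists>t\<in>{0<..<1}. L * ln t + F * ln (1 - t) + K t < r"
proof -
  have "((\<lambda>t. F * ln (1 - t) + K t) \<longlongrightarrow> F * ln (1 - 0) + K 0) (at_right 0)"
    by (intro tendsto_intros continuous_on_Icc_at_rightD[OF K]) auto
  moreover have "LIM t at_right 0. L * ln t :> at_bot"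
    by (rule filterlim_tendsto_pos_mult_at_bot[OF tendsto_const L ln_at_0])
  ultimately have "LIM t at_right 0. (F * ln (1 - t) + K t) + L * ln t :> at_bot"
    by (rule filterlim_tendsto_add_at_bot_iff[THEN iffD2])
  hence "\<forall>\<^sub>F t in at_right 0. L * ln t + F * ln (1 - t) + K t < r"
    by (simp add: filterlim_at_bot_dense add_ac)
  moreover have "\<forall>\<^sub>F t in at_right (0::real). t \<in> {0<..<1}"
    by (simp add: eventually_at_right_field) (auto intro!: exI[of _ 1])
  ultimately have "\<forall>\<^sub>F t in at_right 0. t \<in> {0<..<1} \<and> L * ln t + F * ln (1 - t) + K t < r"
    by (simp add: eventually_conj_iff)
  thus ?thesis
    using eventually_happens'[OF trivial_limit_at_right_real] by blast
qed

lemma log_barrier_surj: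
  fixes L F :: real and K :: "real \<Rightarrow> real"
  assumes K: "continuous_on {0..1} K" and "0 < L" "F < 0"
  shows "(\<lambda>t. L * ln t + F * ln (1 - t) + K t) ` {0<..<1} = UNIV"
proof -
  define h where "h t = L * ln t + F * ln (1 - t) + K t" for t
  have "continuous_on {0<..<1} h"
    unfolding h_def
    by (intro continuous_intros continuous_on_subset[OF K]) auto
  hence conn: "connected (h ` {0<..<1})"
    by (rule connected_continuous_image) simp
  have "r \<in> h ` {0<..<1}" for r
  proof -
    obtain t1 where t1: "t1 \<in> {0<..<1}" "h t1 < r"
      using log_barrier_below[OF K \<open>0 < L\<close>] unfolding h_def by blast
    have "continuous_on {0..1} (\<lambda>s. - K (1 - s))"
      by (intro continuous_intros continuous_on_compose2[OF K]) auto
    then obtain s where s: "s \<in> {0<..<1}" "- F * ln s + - L * ln (1 - s) + - K (1 - s) < - r"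
      using log_barrier_below[of "\<lambda>s. - K (1 - s)" "- F" "- L" "- r"] \<open>F < 0\<close> by auto
    have "1 - s \<in> {0<..<1}" "r < h (1 - s)"
      using s by (auto simp: h_def)
    thus ?thesis
      using connectedD_interval[OF conn, of "h t1" "h (1 - s)" r] t1 by auto
  qed
  thus ?thesis unfolding h_def by blast
qed

lemma log_barrier_not_surj:
  fixes L F :: real and K :: "real \<Rightarrow> real"
  assumes K: "continuous_on {0..1} K" and "0 \<le> L" "0 \<le> F"
  shows "(\<lambda>t. L * ln t + F * ln (1 - t) + K t) ` {0<..<1} \<noteq> UNIV"
proof -
  obtain M where M: "\<forall>t\<in>{0..1}. \<bar>K t\<bar> \<le> M"
    using compact_imp_bounded[OF compact_continuous_image[OF K compact_Icc]]
    by (auto simp: bounded_iff)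
  have "L * ln t + F * ln (1 - t) + K t \<le> M" if t: "0 < t" "t < 1" for t
  proof -
    have "L * ln t \<le> 0" "F * ln (1 - t) \<le> 0"
      using t assms(2,3) by (simp_all add: mult_nonneg_nonpos)
    moreover have "K t \<le> M"
      using M t by (simp add: abs_le_iff)
    ultimately show ?thesis by linarith
  qed
  hence "M + 1 \<notin> (\<lambda>t. L * ln t + F * ln (1 - t) + K t) ` {0<..<1}"
    by fastforce
  thus ?thesis by blast
qed

lemma log_barrier_surj_iff:
  fixes L F :: real and K :: "real \<Rightarrow> real"
  assumes K: "continuous_on {0..1} K"
  shows "(\<lambda>t. L * ln t + F * ln (1 - t) + K t) ` {0<..<1} = UNIV \<longleftrightarrow> L * F < 0"
proof -
  let ?h = "\<lambda>L F K t. L * ln t + F * ln (1 - t) + K t"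
  have K': "continuous_on {0..1} (\<lambda>t. - K t)"
    using K by (rule continuous_on_minus)
  have "?h (- L) (- F) (\<lambda>t. - K t) ` {0<..<1} = uminus ` ?h L F K ` {0<..<1}"
    by (auto simp: image_image)
  hence neg: "?h (- L) (- F) (\<lambda>t. - K t) ` {0<..<1} = UNIV \<longleftrightarrow> ?h L F K ` {0<..<1} = UNIV"
    using inj_image_eq_iff[OF bij_is_inj[OF bij_uminus], of "?h L F K ` {0<..<1}" UNIV] by simp
  consider "0 < L" "F < 0" | "0 < - L" "- F < 0" | "0 \<le> L" "0 \<le> F" | "0 \<le> - L" "0 \<le> - F"
    by linarith
  thus ?thesis
  proof cases
    case 1
    thus ?thesis using log_barrier_surj[OF K] by (simp add: mult_neg_pos mult_pos_neg)
  next
    case 2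
    thus ?thesis using log_barrier_surj[OF K', of "- L" "- F"] neg by (simp add: mult_neg_pos)
  next
    case 3
    thus ?thesis using log_barrier_not_surj[OF K] by (simp add: not_less)
  next
    case 4
    thus ?thesis using log_barrier_not_surj[OF K', of "- L" "- F"] neg by (simp add: not_less zero_le_mult_iff)
  qed
qed

definition ln_vpow :: "real^'m \<Rightarrow> real^'m \<Rightarrow> real" where
  "ln_vpow y z = (\<Sum>i\<in>UNIV. z $ i * ln (y $ i))"

lemma vpow_eq_exp_ln_vpow:
  assumes "pos_vec y"
  shows "vpow y z = exp (ln_vpow y z)"
  unfolding vpow_def ln_vpow_def exp_sum[OF finite]
  using assms by (intro prod.cong) (auto simp: powr_def pos_vec_def mult.commute less_imp_neq[symmetric])

lemma ln_vpow_scaleR: "ln_vpow y (k *\<^sub>R z) = k * ln_vpow y z"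
  by (simp add: ln_vpow_def sum_distrib_left mult.assoc)

lemma ln_vpow_surj:
  fixes b :: "real^'m"
  assumes "b \<noteq> 0"
  obtains c where "pos_vec c" "ln_vpow c b = r"
proof -
  obtain j where j: "b $ j \<noteq> 0" using assms by (auto simp: vec_eq_iff)
  define c :: "real^'m" where "c = (\<chi> i. if i = j then exp (r / b $ j) else 1)"
  have "ln_vpow c b = (\<Sum>i\<in>UNIV. if i = j then r else 0)"
    unfolding ln_vpow_def by (rule sum.cong) (use j in \<open>auto simp: c_def\<close>)
  thus ?thesis by (intro that[of c]) (auto simp: c_def pos_vec_def)
qed

lemma sol_set_span_singleton:
  assumes "mon_dep_space B = span {b}" and "pos_vec c"
  shows "sol_set A B c = {y \<in> coeff_polytope A. ln_vpow y b = ln_vpow c b}"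
proof -
  have "(\<forall>z\<in>mon_dep_space B. vpow y z = vpow c z) \<longleftrightarrow> ln_vpow y b = ln_vpow c b"
    if "pos_vec y" for y
    using that assms
    by (auto simp: span_singleton vpow_eq_exp_ln_vpow ln_vpow_scaleR dest: spec[of _ 1])
  thus ?thesis
    by (auto simp: sol_set_def coeff_polytope_def pos_vec_def)
qed

lemma sol_set_nonempty_iff_surj:
  fixes A :: "real^'m^'l" and B :: "real^'m^'n"
  assumes "mon_dep_space B = span {b}" and "b \<noteq> 0"
  shows "(\<forall>c. pos_vec c \<longrightarrow> sol_set A B c \<noteq> {}) \<longleftrightarrow>
         (\<lambda>y. ln_vpow y b) ` coeff_polytope A = UNIV"
proof
  assume H: "\<forall>c. pos_vec c \<longrightarrow> sol_set A B c \<noteq> {}"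
  have "r \<in> (\<lambda>y. ln_vpow y b) ` coeff_polytope A" for r
  proof -
    obtain c where c: "pos_vec c" "ln_vpow c b = r"
      using ln_vpow_surj[OF assms(2)] .
    then obtain y where "y \<in> sol_set A B c"
      using H by blast
    hence "y \<in> coeff_polytope A" "r = ln_vpow y b"
      unfolding sol_set_span_singleton[OF assms(1) c(1)] c(2) by auto
    thus ?thesis by (rule rev_image_eqI)
  qed
  thus "(\<lambda>y. ln_vpow y b) ` coeff_polytope A = UNIV" by auto
next
  assume surj: "(\<lambda>y. ln_vpow y b) ` coeff_polytope A = UNIV"
  show "\<forall>c. pos_vec c \<longrightarrow> sol_set A B c \<noteq> {}"
  proof (intro allI impI)
    fix c :: "real^'m" assume c: "pos_vec c"
    have "ln_vpow c b \<in> (\<lambda>y. ln_vpow y b) ` coeff_polytope A"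
      using surj by simp
    then obtain y where "y \<in> coeff_polytope A" "ln_vpow y b = ln_vpow c b"
      by (auto elim: imageE)
    thus "sol_set A B c \<noteq> {}"
      unfolding sol_set_span_singleton[OF assms(1) c] by auto
  qed
qed

lemma closed_segment_extension_degenerate:
  fixes a b :: "'a::real_vector"
  assumes "a + s *\<^sub>R (a - b) \<in> closed_segment a b" and "0 < s"
  shows "a = b"
proof -
  obtain u where u: "0 \<le> u" "a + s *\<^sub>R (a - b) = (1 - u) *\<^sub>R a + u *\<^sub>R b"
    using assms(1) by (auto simp: in_segment)
  hence "(s + u) *\<^sub>R (a - b) = 0"
    by (simp add: algebra_simps)
  thus ?thesis using u(1) assms(2) by simp
qed

lemma coeff_polytope_closure_le_one:
  assumes "y \<in> coeff_polytope_closure A"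
  shows "y $ i \<le> 1"
proof -
  have "y $ i \<le> (\<Sum>j\<in>UNIV. y $ j)"
    using assms by (intro member_le_sum) (auto simp: coeff_polytope_closure_def)
  thus ?thesis using assms by (simp add: coeff_polytope_closure_def)
qed

lemma coeff_polytope_closure_segment_endpoint_zero:
  assumes seg: "coeff_polytope_closure A = closed_segment y1 y2" and "y1 \<noteq> y2"
  shows "\<exists>i. y1 $ i = 0"
proof (rule ccontr)
  assume "\<not> (\<exists>i. y1 $ i = 0)"
  have y1: "y1 \<in> coeff_polytope_closure A" and y2: "y2 \<in> coeff_polytope_closure A"
    using seg by auto
  have pos: "0 < y1 $ i" for i
    using y1 \<open>\<not> (\<exists>i. y1 $ i = 0)\<close> by (force simp: coeff_polytope_closure_def less_le)
  define s where "s = Min (range (\<lambda>i. y1 $ i))"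
  have "0 < s" unfolding s_def using pos by (subst Min_gr_iff) auto
  have s_le: "s \<le> y1 $ i" for i unfolding s_def by (rule Min_le) auto
  have "y1 + s *\<^sub>R (y1 - y2) \<in> coeff_polytope_closure A"
  proof -
    have "0 \<le> y1 $ i + s * (y1 $ i - y2 $ i)" for i
    proof -
      have "s * y2 $ i \<le> s"
        using coeff_polytope_closure_le_one[OF y2] \<open>0 < s\<close> by (simp add: mult_left_le)
      moreover have "0 \<le> s * y1 $ i" using pos[of i] \<open>0 < s\<close> by simp
      ultimately show ?thesis using s_le[of i] by (simp add: right_diff_distrib)
    qed
    moreover have "A *v (y1 + s *\<^sub>R (y1 - y2)) = 0"
      using y1 y2 by (simp add: coeff_polytope_closure_def matrix_vector_right_distrib
          matrix_vector_mult_diff_distrib matrix_vector_mult_scaleR)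
    moreover have "(\<Sum>i\<in>UNIV. (y1 + s *\<^sub>R (y1 - y2)) $ i) = 1"
      using y1 y2 by (simp add: coeff_polytope_closure_def sum.distrib sum_subtractf
          sum_distrib_left[symmetric])
    ultimately show ?thesis by (simp add: coeff_polytope_closure_def)
  qed
  hence "y1 = y2"
    using closed_segment_extension_degenerate \<open>0 < s\<close> seg by blast
  thus False using \<open>y1 \<noteq> y2\<close> by contradiction
qed

locale coeff_polytope_segment =
  fixes A :: "real^'m^'l" and y1 y2 :: "real^'m"
  assumes closure_eq: "coeff_polytope_closure A = closed_segment y1 y2"
    and endpoints_ne: "y1 \<noteq> y2"
    and nonempty: "coeff_polytope A \<noteq> {}"
begin

lemma endpoint_nonneg: "0 \<le> y1 $ i" "0 \<le> y2 $ i"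
  using closure_eq by (auto simp: set_eq_iff coeff_polytope_closure_def)

lemma endpoint_zero: "\<exists>i. y1 $ i = 0" "\<exists>i. y2 $ i = 0"
  using coeff_polytope_closure_segment_endpoint_zero[OF closure_eq endpoints_ne]
    coeff_polytope_closure_segment_endpoint_zero[of A y2 y1] closure_eq endpoints_ne
  by (auto simp: closed_segment_commute)

lemma endpoint_sum_pos: "0 < y1 $ i + y2 $ i"
proof -
  obtain y where y: "y \<in> coeff_polytope A" using nonempty by blast
  hence "y \<in> closed_segment y1 y2"
    using closure_eq by (auto simp: coeff_polytope_def coeff_polytope_closure_def less_imp_le)
  then obtain u where "y = (1 - u) *\<^sub>R y1 + u *\<^sub>R y2"
    by (auto simp: in_segment)
  moreover have "0 < y $ i" using y by (simp add: coeff_polytope_def)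
  ultimately show ?thesis
    using endpoint_nonneg[of i] by (cases "y1 $ i = 0"; cases "y2 $ i = 0") auto
qed

lemma coeff_polytope_eq_open_segment: "coeff_polytope A = open_segment y1 y2"
proof -
  have pos: "0 < y $ i" if y: "y \<in> open_segment y1 y2" for y i
  proof -
    obtain u where u: "0 < u" "u < 1" "y = (1 - u) *\<^sub>R y1 + u *\<^sub>R y2"
      using y unfolding in_segment by blast
    consider "0 < y1 $ i" | "0 < y2 $ i"
      using endpoint_sum_pos[of i] endpoint_nonneg[of i] by linarith
    thus ?thesis
      using u endpoint_nonneg[of i] by cases (simp_all add: add_pos_nonneg add_nonneg_pos)
  qed
  have "coeff_polytope A = {y \<in> closed_segment y1 y2. \<forall>i. 0 < y $ i}"
    using closure_eq by (auto simp: coeff_polytope_def coeff_polytope_closure_def set_eq_iff less_imp_le)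
  also have "\<dots> = open_segment y1 y2"
  proof
    show "{y \<in> closed_segment y1 y2. \<forall>i. 0 < y $ i} \<subseteq> open_segment y1 y2"
      unfolding open_segment_def using endpoint_zero by (auto simp: less_le)
    show "open_segment y1 y2 \<subseteq> {y \<in> closed_segment y1 y2. \<forall>i. 0 < y $ i}"
      using pos open_closed_segment by blast
  qed
  finally show ?thesis .
qed

lemma qvec_bounds: "-1 \<le> qvec y1 y2 $ i" "qvec y1 y2 $ i \<le> 1"
  using endpoint_sum_pos[of i] endpoint_nonneg[of i] by (simp_all add: qvec_def field_simps)

lemma qvec_eq_one_iff: "qvec y1 y2 $ i = 1 \<longleftrightarrow> y2 $ i = 0"
  using endpoint_sum_pos[of i] by (simp add: qvec_def field_simps)

lemma qvec_eq_neg_one_iff: "qvec y1 y2 $ i = -1 \<longleftrightarrow> y1 $ i = 0"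
  using endpoint_sum_pos[of i] by (simp add: qvec_def field_simps)

lemma lumped_first_eq: "lumped_first b (qvec y1 y2) = (\<Sum>i | y2 $ i = 0. b $ i)"
proof -
  have "Max (range (\<lambda>j. qvec y1 y2 $ j)) = 1"
  proof (rule Max_eqI)
    obtain i where "y2 $ i = 0" using endpoint_zero(2) ..
    thus "1 \<in> range (\<lambda>j. qvec y1 y2 $ j)" by (metis qvec_eq_one_iff rangeI)
  qed (use qvec_bounds in auto)
  thus ?thesis by (simp add: lumped_first_def qvec_eq_one_iff)
qed

lemma lumped_last_eq: "lumped_last b (qvec y1 y2) = (\<Sum>i | y1 $ i = 0. b $ i)"
proof -
  have "Min (range (\<lambda>j. qvec y1 y2 $ j)) = -1"
  proof (rule Min_eqI)
    obtain i where "y1 $ i = 0" using endpoint_zero(1) ..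
    thus "-1 \<in> range (\<lambda>j. qvec y1 y2 $ j)" by (metis qvec_eq_neg_one_iff rangeI)
  qed (use qvec_bounds in auto)
  thus ?thesis by (simp add: lumped_last_def qvec_eq_neg_one_iff)
qed

text \<open>The coordinate of y(t) with its vanishing factor t or 1 - t removed.\<close>
definition regular_factor :: "'m \<Rightarrow> real \<Rightarrow> real" where
  "regular_factor i t =
    (if y1 $ i = 0 then y2 $ i else if y2 $ i = 0 then y1 $ i else (1 - t) * y1 $ i + t * y2 $ i)"

definition regular_part :: "real^'m \<Rightarrow> real \<Rightarrow> real" where
  "regular_part b t = (\<Sum>i\<in>UNIV. b $ i * ln (regular_factor i t))"

lemma segment_coordinate:
  "((1 - t) *\<^sub>R y1 + t *\<^sub>R y2) $ i =
     (if y1 $ i = 0 then t else 1) * (if y2 $ i = 0 then 1 - t else 1) * regular_factor i t"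
  using endpoint_sum_pos[of i] by (auto simp: regular_factor_def)

lemma regular_factor_pos:
  assumes "0 \<le> t" "t \<le> 1"
  shows "0 < regular_factor i t"
proof -
  have "0 < (1 - t) * y1 $ i + t * y2 $ i" if "0 < y1 $ i" "0 < y2 $ i"
    using assms that by (cases "t = 1") (auto intro: add_pos_nonneg)
  thus ?thesis
    using endpoint_sum_pos[of i] endpoint_nonneg[of i] by (auto simp: regular_factor_def less_le)
qed

lemma continuous_on_regular_part: "continuous_on {0..1} (regular_part b)"
proof -
  have "continuous_on {0..1} (regular_factor i)" for i
    unfolding regular_factor_def
    by (cases "y1 $ i = 0"; cases "y2 $ i = 0") (auto intro!: continuous_intros)
  thus ?thesis
    unfolding regular_part_def
    using regular_factor_pos by (auto intro!: continuous_intros simp: less_imp_neq[symmetric])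
qed

lemma ln_vpow_segment:
  assumes "0 < t" "t < 1"
  shows "ln_vpow ((1 - t) *\<^sub>R y1 + t *\<^sub>R y2) b =
    (\<Sum>i | y1 $ i = 0. b $ i) * ln t + (\<Sum>i | y2 $ i = 0. b $ i) * ln (1 - t) + regular_part b t"
proof -
  have "ln (((1 - t) *\<^sub>R y1 + t *\<^sub>R y2) $ i) =
      (if y1 $ i = 0 then ln t else 0) + (if y2 $ i = 0 then ln (1 - t) else 0) + ln (regular_factor i t)"
    for i
    unfolding segment_coordinate using assms regular_factor_pos[of t i] by (auto simp: ln_mult)
  hence "ln_vpow ((1 - t) *\<^sub>R y1 + t *\<^sub>R y2) b =
      (\<Sum>i\<in>UNIV. (if y1 $ i = 0 then b $ i else 0) * ln t
        + (if y2 $ i = 0 then b $ i else 0) * ln (1 - t) + b $ i * ln (regular_factor i t))"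
    unfolding ln_vpow_def by (intro sum.cong) (simp_all add: algebra_simps)
  thus ?thesis
    by (simp add: sum.distrib sum_distrib_right[symmetric] sum.If_cases regular_part_def)
qed

lemma image_ln_vpow:
  "(\<lambda>y. ln_vpow y b) ` coeff_polytope A =
    (\<lambda>t. (\<Sum>i | y1 $ i = 0. b $ i) * ln t + (\<Sum>i | y2 $ i = 0. b $ i) * ln (1 - t)
      + regular_part b t) ` {0<..<1}" (is "_ = ?rhs")
proof -
  have "(\<lambda>y. ln_vpow y b) ` coeff_polytope A =
      (\<lambda>t. ln_vpow ((1 - t) *\<^sub>R y1 + t *\<^sub>R y2) b) ` {0<..<1}"
    by (simp add: coeff_polytope_eq_open_segment open_segment_image_interval endpoints_ne image_image)
  also have "\<dots> = ?rhs"
    by (rule image_cong[OF refl ln_vpow_segment]) auto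
  finally show ?thesis .
qed

end

theorem theorem3:
  fixes A :: "real^'m^'l" and B :: "real^'m^'n" and y1 y2 b :: "real^'m"
  assumes "\<exists>y. A *v y = 0 \<and> pos_vec y"
    and "aff_dim (coeff_polytope A) = 1"
    and "dim (mon_dep_space B) = 1"
    and "coeff_polytope_closure A = closed_segment y1 y2" and "y1 \<noteq> y2"
    and "mon_dep_space B = span {b}" and "b \<noteq> 0"
  shows "(\<forall>c. pos_vec c \<longrightarrow> sol_set A B c \<noteq> {}) \<longleftrightarrow>
         lumped_first b (qvec y1 y2) * lumped_last b (qvec y1 y2) < 0"
proof -
  \<comment> \<open>The positive kernel vector and dim D = 1 are implied by the other hypotheses.\<close>
  have "coeff_polytope A \<noteq> {}"
    using assms(2) by auto
  then interpret coeff_polytope_segment A y1 y2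
    using assms(4,5) by unfold_locales
  have "(\<forall>c. pos_vec c \<longrightarrow> sol_set A B c \<noteq> {}) \<longleftrightarrow>
      (\<lambda>y. ln_vpow y b) ` coeff_polytope A = UNIV"
    by (rule sol_set_nonempty_iff_surj[OF assms(6,7)])
  also have "\<dots> \<longleftrightarrow> (\<Sum>i | y1 $ i = 0. b $ i) * (\<Sum>i | y2 $ i = 0. b $ i) < 0"
    unfolding image_ln_vpow by (rule log_barrier_surj_iff[OF continuous_on_regular_part])
  finally show ?thesis
    by (simp add: lumped_first_eq lumped_last_eq mult.commute)
qed

end
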